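(* Let $\mathcal{Z}=\{\boldsymbol{z}_1,\dots,\boldsymbol{z}_N\}\subset\mathbb{R}^d$ and let $\boldsymbol{z}$ be uniformly distributed on $\mathcal{Z}$, i.e. $\mathbb{P}(\boldsymbol{z}=\boldsymbol{z}_i)=1/N$. Let $\boldsymbol{U}\subset[N]$ be a random index set of size $b$ sampled uniformly without replacement, and let $\boldsymbol{V}\subset[N]$ be a random index set of size $N-1$ sampled uniformly without replacement, independent of $\boldsymbol{U}$. For an index set $I$ let $\bar{\mathcal{Z}}_I$ be the average of $\{\boldsymbol{z}_i:i\in I\}$. Then $$\mathbb{E}_{\boldsymbol{U},\boldsymbol{V}}\left(\frac{(b-|\boldsymbol{U}\cap\boldsymbol{V}|)^2}{b^2}(\bar{\mathcal{Z}}_{\boldsymbol{V}}-\bar{\mathcal{Z}}_{\boldsymbol{U}\cap\boldsymbol{V}^c})(\bar{\mathcal{Z}}_{\boldsymbol{V}}-\bar{\mathcal{Z}}_{\boldsymbol{U}\cap\boldsymbol{V}^c})^\top\right)=\frac{1}{Nb}\left(\frac{N}{N-1}\right)^2\mathrm{Cov}(\boldsymbol{z}).$$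
   Context: $\boldsymbol{V}^c=[N]\setminus\boldsymbol{V}$. When $\boldsymbol{U}\cap\boldsymbol{V}^c=\emptyset$ the prefactor $(b-|\boldsymbol{U}\cap\boldsymbol{V}|)^2/b^2$ is $0$ and the integrand is taken to be $0$. $\mathrm{Cov}(\boldsymbol{z})=\frac1N\sum_i(\boldsymbol{z}_i-\bar{\boldsymbol{z}})(\boldsymbol{z}_i-\bar{\boldsymbol{z}})^\top$ is the covariance of the uniform distribution on $\mathcal{Z}$. *)

theory Defs
  imports "HOL-Probability.Probability"
begin

definition outer :: "real ^ 'd \<Rightarrow> real ^ 'd \<Rightarrow> real ^ 'd ^ 'd" where
  "outer x y = (\<chi> i j. x $ i * y $ j)"

text \<open>Average of the points z_i, i in I (the empty average is 0; it only occurs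
  multiplied by a zero prefactor).\<close>
definition avg_idx :: "(nat \<Rightarrow> real ^ 'd) \<Rightarrow> nat set \<Rightarrow> real ^ 'd" where
  "avg_idx z I = (1 / real (card I)) *\<^sub>R (\<Sum>i\<in>I. z i)"

definition cov_unif :: "nat \<Rightarrow> (nat \<Rightarrow> real ^ 'd) \<Rightarrow> real ^ 'd ^ 'd" where
  "cov_unif N z = (1 / real N) *\<^sub>R
     (\<Sum>i<N. outer (z i - avg_idx z {..<N}) (z i - avg_idx z {..<N}))"

definition subsets_pmf :: "nat \<Rightarrow> nat \<Rightarrow> nat set pmf" where
  "subsets_pmf N k = pmf_of_set {S. S \<subseteq> {..<N} \<and> card S = k}"

end

theory Submission
  imports Defs
begin

(* A subset V of size N - 1 is [N] - {j} for a uniformly distributed index j. Then U and the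
   complement of V meet in {j} if j is in U and not at all otherwise, and in the latter case the
   prefactor vanishes. If j is in U, the prefactor is 1/b^2 and the mean of the points in V
   differs from z_j by N/(N-1) times the overall mean minus z_j. Since j lies in U with
   probability b/N, averaging over j yields (b/N) (1/b^2) (N/(N-1))^2 times the average of the
   outer products (z_j - mean)(z_j - mean)^T, which is the covariance. *)

lemma expectation_pair_pmf_finite:
  fixes f :: "'a \<times> 'b \<Rightarrow> 'c::{banach, second_countable_topology}"
  assumes "finite (set_pmf p)" "finite (set_pmf q)"
  shows "measure_pmf.expectation (pair_pmf p q) f =
         measure_pmf.expectation q (\<lambda>y. measure_pmf.expectation p (\<lambda>x. f (x, y)))"
proof -
  have "measure_pmf.expectation (pair_pmf p q) f =
        (\<Sum>xy\<in>set_pmf p \<times> set_pmf q. pmf (pair_pmf p q) xy *\<^sub>R f xy)"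
    using assms by (intro integral_measure_pmf) auto
  also have "\<dots> = (\<Sum>x\<in>set_pmf p. \<Sum>y\<in>set_pmf q. (pmf p x * pmf q y) *\<^sub>R f (x, y))"
    by (simp add: sum.cartesian_product split_def pmf_pair[symmetric])
  also have "\<dots> = (\<Sum>y\<in>set_pmf q. pmf q y *\<^sub>R (\<Sum>x\<in>set_pmf p. pmf p x *\<^sub>R f (x, y)))"
    by (subst sum.swap) (simp add: scaleR_sum_right mult.commute)
  also have "\<dots> = measure_pmf.expectation q (\<lambda>y. \<Sum>x\<in>set_pmf p. pmf p x *\<^sub>R f (x, y))"
    using assms by (intro integral_measure_pmf[symmetric]) auto
  also have "\<dots> = measure_pmf.expectation q (\<lambda>y. measure_pmf.expectation p (\<lambda>x. f (x, y)))"
    using assms by (intro arg_cong[where f = "integral\<^sup>L (measure_pmf q)"] ext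
        integral_measure_pmf[symmetric]) auto
  finally show ?thesis .
qed

lemma expectation_pmf_of_set:
  fixes f :: "'a \<Rightarrow> 'c::{banach, second_countable_topology}"
  assumes "finite A" "A \<noteq> {}"
  shows "measure_pmf.expectation (pmf_of_set A) f = (1 / card A) *\<^sub>R (\<Sum>x\<in>A. f x)"
  using assms by (subst integral_measure_pmf[of A]) (auto simp: scaleR_sum_right)

lemma outer_scaleR: "outer (a *\<^sub>R x) (c *\<^sub>R y) = (a * c) *\<^sub>R outer x y"
  by (simp add: outer_def vec_eq_iff)

lemma outer_minus_commute: "outer (x - y) (x - y) = outer (y - x) (y - x)"
  by (simp add: outer_def vec_eq_iff algebra_simps)

lemma avg_idx_singleton [simp]: "avg_idx z {j} = z j"
  by (simp add: avg_idx_def)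

lemma avg_idx_remove_diff:
  assumes "finite A" "j \<in> A" "card A \<ge> 2"
  shows "avg_idx z (A - {j}) - z j =
    (real (card A) / (real (card A) - 1)) *\<^sub>R (avg_idx z A - z j)"
proof -
  have "real (card A) - 1 \<noteq> 0" "real (card A) \<noteq> 0"
    using assms(3) by auto
  then show ?thesis
    using assms by (simp add: avg_idx_def sum_diff1 of_nat_diff vec_eq_iff field_simps)
qed

lemma card_subsets_containing:
  assumes "finite A" "j \<in> A"
  shows "card {U. U \<subseteq> A \<and> card U = Suc k \<and> j \<in> U} = (card A - 1) choose k"
proof -
  have "{U. U \<subseteq> A \<and> card U = Suc k \<and> j \<in> U} = insert j ` {W. W \<subseteq> A - {j} \<and> card W = k}"
  proof (intro equalityI subsetI)
    fix U assume U: "U \<in> {U. U \<subseteq> A \<and> card U = Suc k \<and> j \<in> U}"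
    then have "U - {j} \<in> {W. W \<subseteq> A - {j} \<and> card W = k}"
      using finite_subset[OF _ assms(1)] by auto
    then show "U \<in> insert j ` {W. W \<subseteq> A - {j} \<and> card W = k}"
      using U by (metis (no_types, lifting) image_eqI insert_Diff mem_Collect_eq)
  next
    fix U assume "U \<in> insert j ` {W. W \<subseteq> A - {j} \<and> card W = k}"
    then obtain W where "U = insert j W" "W \<subseteq> A - {j}" "card W = k"
      by blast
    moreover have "finite W" "j \<notin> W"
      using \<open>W \<subseteq> A - {j}\<close> assms(1) by (auto intro: finite_subset)
    ultimately show "U \<in> {U. U \<subseteq> A \<and> card U = Suc k \<and> j \<in> U}"
      using assms(2) by auto
  qed
  moreover have "inj_on (insert j) {W. W \<subseteq> A - {j} \<and> card W = k}"
    by (rule inj_onI) blast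
  ultimately show ?thesis
    using assms by (simp add: card_image n_subsets)
qed

lemma subsets_card_pred_eq:
  assumes "finite A" "A \<noteq> {}"
  shows "{S. S \<subseteq> A \<and> card S = card A - 1} = (\<lambda>j. A - {j}) ` A"
proof (intro equalityI subsetI)
  fix S assume S: "S \<in> {S. S \<subseteq> A \<and> card S = card A - 1}"
  moreover have "finite S" "card A > 0"
    using S assms by (auto intro: finite_subset)
  ultimately have "card (A - S) = 1"
    by (simp add: card_Diff_subset)
  then obtain j where "A - S = {j}"
    by (auto simp: card_Suc_eq)
  with S show "S \<in> (\<lambda>j. A - {j}) ` A"
    by blast
qed (use assms in auto)

lemma subsets_pmf_card_pred:
  assumes "N \<ge> 1"
  shows "subsets_pmf N (N - 1) = map_pmf (\<lambda>j. {..<N} - {j}) (pmf_of_set {..<N})"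
proof -
  have "inj_on (\<lambda>j. {..<N} - {j}) {..<N}"
    by (auto simp: inj_on_def)
  then have "map_pmf (\<lambda>j. {..<N} - {j}) (pmf_of_set {..<N}) =
      pmf_of_set ((\<lambda>j. {..<N} - {j}) ` {..<N})"
    using assms by (intro map_pmf_of_set_inj) (auto simp: lessThan_empty_iff)
  also have "\<dots> = subsets_pmf N (N - 1)"
    using subsets_card_pred_eq[of "{..<N}"] assms
    by (simp add: subsets_pmf_def lessThan_empty_iff)
  finally show ?thesis ..
qed

lemma set_subsets_pmf:
  assumes "k \<le> N"
  shows "set_pmf (subsets_pmf N k) = {S. S \<subseteq> {..<N} \<and> card S = k}"
proof -
  have "card {S. S \<subseteq> {..<N} \<and> card S = k} \<noteq> 0"
    using assms by (simp add: n_subsets)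
  then show ?thesis
    unfolding subsets_pmf_def by (intro set_pmf_of_set) (auto intro: finite_subset)
qed

lemma prob_subsets_pmf_mem:
  assumes "j < N" "k \<le> N"
  shows "measure_pmf.prob (subsets_pmf N k) {U. j \<in> U} = k / N"
proof -
  let ?S = "{U. U \<subseteq> {..<N} \<and> card U = k}"
  have "card ?S = N choose k"
    by (simp add: n_subsets)
  then have "finite ?S" "?S \<noteq> {}"
    using assms(2) card_gt_0_iff[of ?S] by auto
  moreover have "?S \<inter> {U. j \<in> U} = {U. U \<subseteq> {..<N} \<and> card U = k \<and> j \<in> U}"
    by auto
  ultimately have prob: "measure_pmf.prob (subsets_pmf N k) {U. j \<in> U} =
      card {U. U \<subseteq> {..<N} \<and> card U = k \<and> j \<in> U} / (N choose k)"
    by (simp add: subsets_pmf_def measure_pmf_of_set n_subsets)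
  show ?thesis
  proof (cases k)
    case 0
    have "{U. U \<subseteq> {..<N} \<and> card U = 0 \<and> j \<in> U} = {}"
      by (auto dest: finite_subset[OF _ finite_lessThan])
    then show ?thesis
      using prob 0 by simp
  next
    case (Suc k')
    have "k * (N choose k) = N * ((N - 1) choose k')"
      using times_binomial_minus1_eq[of k N] Suc by simp
    then have "real k * real (N choose k) = real N * real ((N - 1) choose k')"
      by (metis of_nat_mult)
    then have "real ((N - 1) choose k') = real k * real (N choose k) / real N"
      using assms by simp
    moreover have "N choose k > 0"
      using assms(2) by simp
    ultimately show ?thesis
      using prob Suc assms by (simp add: card_subsets_containing)
  qed
qed

definition subsample_deviation ::
    "nat \<Rightarrow> nat \<Rightarrow> (nat \<Rightarrow> real ^ 'd) \<Rightarrow> nat set \<times> nat set \<Rightarrow> real ^ 'd ^ 'd" where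
  "subsample_deviation N b z = (\<lambda>(U, V). ((real b - real (card (U \<inter> V)))\<^sup>2 / (real b)\<^sup>2) *\<^sub>R
     outer (avg_idx z V - avg_idx z (U \<inter> ({..<N} - V)))
           (avg_idx z V - avg_idx z (U \<inter> ({..<N} - V))))"

lemma subsample_deviation_remove:
  assumes "U \<subseteq> {..<N}" "card U = b" "j < N" "N \<ge> 2"
  shows "subsample_deviation N b z (U, {..<N} - {j}) = indicator {U. j \<in> U} U *\<^sub>R
    (((real N / (real N - 1))\<^sup>2 / (real b)\<^sup>2) *\<^sub>R
      outer (z j - avg_idx z {..<N}) (z j - avg_idx z {..<N}))"
proof (cases "j \<in> U")
  case True
  have "U \<inter> ({..<N} - {j}) = U - {j}" "U \<inter> ({..<N} - ({..<N} - {j})) = {j}"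
    using assms(1) True by auto
  moreover have "card (U - {j}) = b - 1" "b \<ge> 1"
    using assms True by (auto simp: finite_subset card_gt_0_iff Suc_le_eq)
  moreover have "avg_idx z ({..<N} - {j}) - z j =
      (real N / (real N - 1)) *\<^sub>R (avg_idx z {..<N} - z j)"
    using avg_idx_remove_diff[of "{..<N}" j z] assms by simp
  ultimately show ?thesis
    using True
    by (simp add: subsample_deviation_def of_nat_diff outer_scaleR power2_eq_square
        outer_minus_commute[of "avg_idx z {..<N}"])
next
  case False
  then have "U \<inter> ({..<N} - {j}) = U"
    using assms(1) by auto
  then show ?thesis
    using False assms(2) by (simp add: subsample_deviation_def)
qed

lemma expectation_subsample_deviation_remove:
  assumes "b \<le> N" "j < N" "N \<ge> 2"
  shows "measure_pmf.expectation (subsets_pmf N b)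
      (\<lambda>U. subsample_deviation N b z (U, {..<N} - {j})) =
    ((real N / (real N - 1))\<^sup>2 / (N * b)) *\<^sub>R outer (z j - avg_idx z {..<N}) (z j - avg_idx z {..<N})"
proof -
  let ?w = "outer (z j - avg_idx z {..<N}) (z j - avg_idx z {..<N})"
  have "measure_pmf.expectation (subsets_pmf N b)
          (\<lambda>U. subsample_deviation N b z (U, {..<N} - {j})) =
        measure_pmf.expectation (subsets_pmf N b) (\<lambda>U. indicator {U. j \<in> U} U *\<^sub>R
          (((real N / (real N - 1))\<^sup>2 / (real b)\<^sup>2) *\<^sub>R ?w))"
    using assms by (intro integral_cong_AE)
      (auto simp: AE_measure_pmf_iff set_subsets_pmf subsample_deviation_remove)
  also have "\<dots> = measure_pmf.prob (subsets_pmf N b) {U. j \<in> U} *\<^sub>R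
          (((real N / (real N - 1))\<^sup>2 / (real b)\<^sup>2) *\<^sub>R ?w)"
    by (subst integral_scaleR_left) (auto simp flip: less_top)
  also have "\<dots> = (b / N) *\<^sub>R (((real N / (real N - 1))\<^sup>2 / (real b)\<^sup>2) *\<^sub>R ?w)"
    using assms by (simp add: prob_subsets_pmf_mem)
  also have "\<dots> = ((real N / (real N - 1))\<^sup>2 / (N * b)) *\<^sub>R ?w"
    by (simp add: power2_eq_square)
  finally show ?thesis .
qed

theorem lemma6:
  fixes N b :: nat and z :: "nat \<Rightarrow> real ^ 'd"
  assumes "N \<ge> 2" and "1 \<le> b" and "b \<le> N"
  shows "measure_pmf.expectation (pair_pmf (subsets_pmf N b) (subsets_pmf N (N - 1)))
           (\<lambda>(U, V). ((real b - real (card (U \<inter> V)))\<^sup>2 / (real b)\<^sup>2) *\<^sub>R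
              outer (avg_idx z V - avg_idx z (U \<inter> ({..<N} - V)))
                    (avg_idx z V - avg_idx z (U \<inter> ({..<N} - V))))
         = (1 / (real N * real b) * (real N / (real N - 1))\<^sup>2) *\<^sub>R cov_unif N z"
proof -
  let ?w = "\<lambda>j. outer (z j - avg_idx z {..<N}) (z j - avg_idx z {..<N})"
  have "measure_pmf.expectation (pair_pmf (subsets_pmf N b) (subsets_pmf N (N - 1)))
          (subsample_deviation N b z)
      = measure_pmf.expectation (subsets_pmf N (N - 1))
          (\<lambda>V. measure_pmf.expectation (subsets_pmf N b) (\<lambda>U. subsample_deviation N b z (U, V)))"
    using assms by (intro expectation_pair_pmf_finite) (auto simp: set_subsets_pmf)
  also have "\<dots> = measure_pmf.expectation (pmf_of_set {..<N})
          (\<lambda>j. measure_pmf.expectation (subsets_pmf N b)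
            (\<lambda>U. subsample_deviation N b z (U, {..<N} - {j})))"
    using assms subsets_pmf_card_pred[of N] by simp
  also have "\<dots> = measure_pmf.expectation (pmf_of_set {..<N})
          (\<lambda>j. ((real N / (real N - 1))\<^sup>2 / (N * b)) *\<^sub>R ?w j)"
    using assms by (intro integral_cong_AE)
      (auto simp: AE_measure_pmf_iff lessThan_empty_iff expectation_subsample_deviation_remove)
  also have "\<dots> = (1 / (real N * real b) * (real N / (real N - 1))\<^sup>2) *\<^sub>R cov_unif N z"
    using assms
    by (simp add: expectation_pmf_of_set lessThan_empty_iff cov_unif_def scaleR_sum_right)
  finally show ?thesis
    unfolding subsample_deviation_def .
qed

end
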